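(* Let $(\Delta,\mathcal H)$ be a generic cut and $K_\Delta,K_+,K_-$ the associated simplicial complexes on $\widetilde{[m]}=[m]\cup\{o\}$ as defined below. Then $$K_+\cap K_-=\operatorname{star}_{K_+\cup K_-}(o)=\operatorname{star}_{K_+}(o)=\operatorname{star}_{K_-}(o),$$ $$(K_+\cup K_-)\setminus K_\Delta=O_{K_+\cup K_-}(o)=O_{K_+}(o)=O_{K_-}(o).$$
   Context: Let $\Delta\subset\mathbb R^n$ be an $n$-dimensional simple polytope $\Delta=\{x:\langle x,\lambda_i\rangle+\eta_i\ge0,\ i=1,\dots,m\}$ (bounding hyperplanes in general position), whose facets $H_i=\Delta\cap\{\langle x,\lambda_i\rangle+\eta_i=0\}$ are all nonempty. A generic cut is a hyperplane $\mathcal H=\{\langle x,\lambda_0\rangle+\xi=0\}$ such that $\mathcal H$ and the hyperplanes $\{\langle x,\lambda_i\rangle+\eta_i=0\}$ are in general position and $H_o:=\mathcal H\cap\Delta\ne\varnothing$. Set $\Delta_+=\Delta\cap\{\langle x,\lambda_0\rangle+\xi\ge0\}$, $\Delta_-=\Delta\cap\{\langle x,\lambda_0\rangle+\xi\le0\}$. Define simplicial complexes on $\widetilde{[m]}$: $K_\Delta=\{\sigma\subset[m]:\bigcap_{i\in\sigma}H_i\ne\varnothing\}\cup\{\varnothing\}$, $K_\pm=\{\sigma\subset\widetilde{[m]}:\bigcap_{i\in\sigma}(H_i\cap\Delta_\pm)\ne\varnothing\}\cup\{\varnothing\}$ (with $H_o$ the facet indexed by $o$). For a simplicial complex $K$ and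 a vertex $o$: $O_K(o)=\{\sigma\in K: o\in\sigma\}$, and $\operatorname{star}_K(o)$ is its closure, i.e. the set of all subsets of faces of $K$ containing $o$. *)

theory Defs
  imports "HOL-Analysis.Analysis"
begin

text \<open>Index conventions: the facet labels of the cut polytopes live in \<open>nat option\<close>;
  \<open>Some i\<close> (for \<open>i \<in> {1..m}\<close>) is the label \<open>i \<in> [m]\<close> and \<open>None\<close> is the new label \<open>o\<close>.\<close>

definition hyperplane :: "('i \<Rightarrow> 'a::euclidean_space) \<Rightarrow> ('i \<Rightarrow> real) \<Rightarrow> 'i \<Rightarrow> 'a set" where
  "hyperplane L E i = {x. L i \<bullet> x + E i = 0}"

definition general_position :: "('i \<Rightarrow> 'a::euclidean_space) \<Rightarrow> ('i \<Rightarrow> real) \<Rightarrow> 'i set \<Rightarrow> bool" where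
  "general_position L E I \<longleftrightarrow>
     (\<forall>\<sigma>. \<sigma> \<subseteq> I \<and> \<sigma> \<noteq> {} \<and> (\<Inter>i\<in>\<sigma>. hyperplane L E i) \<noteq> {} \<longrightarrow>
          inj_on L \<sigma> \<and> independent (L ` \<sigma>))"

definition polytope_of :: "nat \<Rightarrow> (nat \<Rightarrow> 'a::euclidean_space) \<Rightarrow> (nat \<Rightarrow> real) \<Rightarrow> 'a set" where
  "polytope_of m lam eta = {x. \<forall>i\<in>{1..m}. lam i \<bullet> x + eta i \<ge> 0}"

definition poly_facet :: "nat \<Rightarrow> (nat \<Rightarrow> 'a::euclidean_space) \<Rightarrow> (nat \<Rightarrow> real) \<Rightarrow> nat \<Rightarrow> 'a set" where
  "poly_facet m lam eta i = polytope_of m lam eta \<inter> {x. lam i \<bullet> x + eta i = 0}"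

definition simple_polytope :: "nat \<Rightarrow> (nat \<Rightarrow> 'a::euclidean_space) \<Rightarrow> (nat \<Rightarrow> real) \<Rightarrow> bool" where
  "simple_polytope m lam eta \<longleftrightarrow>
     (\<forall>v. v extreme_point_of polytope_of m lam eta \<longrightarrow>
        card {i\<in>{1..m}. v \<in> poly_facet m lam eta i} = DIM('a))"

definition ext_normal :: "(nat \<Rightarrow> 'a) \<Rightarrow> 'a \<Rightarrow> nat option \<Rightarrow> 'a" where
  "ext_normal lam l0 j = (case j of None \<Rightarrow> l0 | Some i \<Rightarrow> lam i)"

definition ext_offset :: "(nat \<Rightarrow> real) \<Rightarrow> real \<Rightarrow> nat option \<Rightarrow> real" where
  "ext_offset eta xi j = (case j of None \<Rightarrow> xi | Some i \<Rightarrow> eta i)"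

definition ext_index :: "nat \<Rightarrow> nat option set" where
  "ext_index m = insert None (Some ` {1..m})"

definition generic_cut ::
  "nat \<Rightarrow> (nat \<Rightarrow> 'a::euclidean_space) \<Rightarrow> (nat \<Rightarrow> real) \<Rightarrow> 'a \<Rightarrow> real \<Rightarrow> bool" where
  "generic_cut m lam eta l0 xi \<longleftrightarrow>
     general_position (ext_normal lam l0) (ext_offset eta xi) (ext_index m) \<and>
     polytope_of m lam eta \<inter> {x. l0 \<bullet> x + xi = 0} \<noteq> {}"

definition half_plus :: "'a::euclidean_space \<Rightarrow> real \<Rightarrow> 'a set" where
  "half_plus l0 xi = {x. l0 \<bullet> x + xi \<ge> 0}"

definition half_minus :: "'a::euclidean_space \<Rightarrow> real \<Rightarrow> 'a set" where
  "half_minus l0 xi = {x. l0 \<bullet> x + xi \<le> 0}"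

definition ext_facet ::
  "nat \<Rightarrow> (nat \<Rightarrow> 'a::euclidean_space) \<Rightarrow> (nat \<Rightarrow> real) \<Rightarrow> 'a \<Rightarrow> real \<Rightarrow> nat option \<Rightarrow> 'a set" where
  "ext_facet m lam eta l0 xi j =
     (case j of None \<Rightarrow> polytope_of m lam eta \<inter> {x. l0 \<bullet> x + xi = 0}
              | Some i \<Rightarrow> poly_facet m lam eta i)"

definition K_Delta :: "nat \<Rightarrow> (nat \<Rightarrow> 'a::euclidean_space) \<Rightarrow> (nat \<Rightarrow> real) \<Rightarrow> nat option set set" where
  "K_Delta m lam eta =
     {Some ` \<sigma> | \<sigma>. \<sigma> \<subseteq> {1..m} \<and> (\<Inter>i\<in>\<sigma>. poly_facet m lam eta i) \<noteq> {}} \<union> {{}}"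

definition K_plus ::
  "nat \<Rightarrow> (nat \<Rightarrow> 'a::euclidean_space) \<Rightarrow> (nat \<Rightarrow> real) \<Rightarrow> 'a \<Rightarrow> real \<Rightarrow> nat option set set" where
  "K_plus m lam eta l0 xi =
     {\<sigma>. \<sigma> \<subseteq> ext_index m \<and>
          (\<Inter>j\<in>\<sigma>. ext_facet m lam eta l0 xi j \<inter> half_plus l0 xi) \<noteq> {}} \<union> {{}}"

definition K_minus ::
  "nat \<Rightarrow> (nat \<Rightarrow> 'a::euclidean_space) \<Rightarrow> (nat \<Rightarrow> real) \<Rightarrow> 'a \<Rightarrow> real \<Rightarrow> nat option set set" where
  "K_minus m lam eta l0 xi =
     {\<sigma>. \<sigma> \<subseteq> ext_index m \<and>
          (\<Inter>j\<in>\<sigma>. ext_facet m lam eta l0 xi j \<inter> half_minus l0 xi) \<noteq> {}} \<union> {{}}"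

definition open_star_at :: "'v set set \<Rightarrow> 'v \<Rightarrow> 'v set set" where
  "open_star_at K v = {\<sigma>\<in>K. v \<in> \<sigma>}"

definition star_at :: "'v set set \<Rightarrow> 'v \<Rightarrow> 'v set set" where
  "star_at K v = {\<tau>. \<exists>\<sigma>\<in>K. v \<in> \<sigma> \<and> \<tau> \<subseteq> \<sigma>}"

end

theory Submission
  imports Defs
begin

text \<open>A face containing \<open>o\<close> lies in \<open>H\<^sub>o\<close>, which lies on the cutting hyperplane, so the
  choice of half-space is irrelevant for it: such faces are the same in \<open>K\<^sub>+\<close> and \<open>K\<^sub>-\<close>.
  A face of both \<open>K\<^sub>+\<close> and \<open>K\<^sub>-\<close> is realised by a convex set meeting both closed half-spaces,
  hence, being connected, meeting the hyperplane, so adding \<open>o\<close> gives again a face. Faces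
  without \<open>o\<close> are faces of \<open>K\<^sub>\<Delta>\<close> and faces with \<open>o\<close> never are; the identities then follow
  combinatorially.\<close>

lemma open_star_at_cong:
  assumes "\<And>\<sigma>. v \<in> \<sigma> \<Longrightarrow> \<sigma> \<in> K \<longleftrightarrow> \<sigma> \<in> L"
  shows "open_star_at K v = open_star_at L v"
  using assms unfolding open_star_at_def by blast

lemma star_at_cong:
  assumes "\<And>\<sigma>. v \<in> \<sigma> \<Longrightarrow> \<sigma> \<in> K \<longleftrightarrow> \<sigma> \<in> L"
  shows "star_at K v = star_at L v"
  using assms unfolding star_at_def by blast

lemma Diff_eq_open_star_at:
  assumes "\<And>\<sigma>. \<sigma> \<in> K \<Longrightarrow> \<sigma> \<in> L \<longleftrightarrow> v \<notin> \<sigma>"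
  shows "K - L = open_star_at K v"
  using assms unfolding open_star_at_def by blast

lemma Int_eq_star_at_Un:
  assumes down_K: "\<And>\<sigma> \<tau>. \<sigma> \<in> K \<Longrightarrow> \<tau> \<subseteq> \<sigma> \<Longrightarrow> \<tau> \<in> K"
    and down_L: "\<And>\<sigma> \<tau>. \<sigma> \<in> L \<Longrightarrow> \<tau> \<subseteq> \<sigma> \<Longrightarrow> \<tau> \<in> L"
    and agree: "\<And>\<sigma>. v \<in> \<sigma> \<Longrightarrow> \<sigma> \<in> K \<longleftrightarrow> \<sigma> \<in> L"
    and cone: "\<And>\<sigma>. \<sigma> \<in> K \<Longrightarrow> \<sigma> \<in> L \<Longrightarrow> insert v \<sigma> \<in> K"
  shows "K \<inter> L = star_at (K \<union> L) v"
proof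
  show "K \<inter> L \<subseteq> star_at (K \<union> L) v"
    using cone unfolding star_at_def by blast
  show "star_at (K \<union> L) v \<subseteq> K \<inter> L"
    using agree down_K down_L unfolding star_at_def by blast
qed

lemma convex_polytope_of: "convex (polytope_of m lam eta)"
proof -
  have "convex {x. 0 \<le> lam i \<bullet> x + eta i}" for i
  proof -
    have "{x. 0 \<le> lam i \<bullet> x + eta i} = {x. - eta i \<le> lam i \<bullet> x}"
      by auto
    then show ?thesis
      by (simp add: convex_halfspace_ge)
  qed
  moreover have "polytope_of m lam eta = (\<Inter>i\<in>{1..m}. {x. 0 \<le> lam i \<bullet> x + eta i})"
    by (auto simp: polytope_of_def)
  ultimately show ?thesis
    by (simp add: convex_INT)
qed

lemma convex_ext_facet: "convex (ext_facet m lam eta l0 xi j)"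
proof -
  have "convex {x. a \<bullet> x + b = 0}" for a :: 'a and b
    using convex_hyperplane[of a "- b"] by (simp add: eq_neg_iff_add_eq_0)
  then show ?thesis
    by (cases j) (simp_all add: ext_facet_def poly_facet_def convex_Int convex_polytope_of)
qed

lemma ext_facet_subset_polytope_of: "ext_facet m lam eta l0 xi j \<subseteq> polytope_of m lam eta"
  by (cases j) (auto simp: ext_facet_def poly_facet_def)

lemma mem_K_plus_iff:
  "\<sigma> \<in> K_plus m lam eta l0 xi \<longleftrightarrow>
     \<sigma> \<subseteq> ext_index m \<and> (\<Inter>j\<in>\<sigma>. ext_facet m lam eta l0 xi j \<inter> half_plus l0 xi) \<noteq> {}"
  unfolding K_plus_def by auto

lemma mem_K_minus_iff:
  "\<sigma> \<in> K_minus m lam eta l0 xi \<longleftrightarrow>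
     \<sigma> \<subseteq> ext_index m \<and> (\<Inter>j\<in>\<sigma>. ext_facet m lam eta l0 xi j \<inter> half_minus l0 xi) \<noteq> {}"
  unfolding K_minus_def by auto

lemma K_plus_subset_closed:
  "\<sigma> \<in> K_plus m lam eta l0 xi \<Longrightarrow> \<tau> \<subseteq> \<sigma> \<Longrightarrow> \<tau> \<in> K_plus m lam eta l0 xi"
  unfolding mem_K_plus_iff by blast

lemma K_minus_subset_closed:
  "\<sigma> \<in> K_minus m lam eta l0 xi \<Longrightarrow> \<tau> \<subseteq> \<sigma> \<Longrightarrow> \<tau> \<in> K_minus m lam eta l0 xi"
  unfolding mem_K_minus_iff by blast

lemma INT_Int_eq_INT_if_subset:
  assumes "a \<in> \<sigma>" "F a \<subseteq> S"
  shows "(\<Inter>j\<in>\<sigma>. F j \<inter> S) = (\<Inter>j\<in>\<sigma>. F j)"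
  using assms by blast

lemma K_plus_iff_K_minus_if_None:
  assumes "None \<in> \<sigma>"
  shows "\<sigma> \<in> K_plus m lam eta l0 xi \<longleftrightarrow> \<sigma> \<in> K_minus m lam eta l0 xi"
proof -
  have "ext_facet m lam eta l0 xi None \<subseteq> half_plus l0 xi"
    and "ext_facet m lam eta l0 xi None \<subseteq> half_minus l0 xi"
    by (auto simp: ext_facet_def half_plus_def half_minus_def)
  then show ?thesis
    unfolding mem_K_plus_iff mem_K_minus_iff
    using INT_Int_eq_INT_if_subset[OF assms] by metis
qed

lemma insert_None_K_plus:
  assumes cut: "polytope_of m lam eta \<inter> {x. l0 \<bullet> x + xi = 0} \<noteq> {}"
    and plus: "\<sigma> \<in> K_plus m lam eta l0 xi" and minus: "\<sigma> \<in> K_minus m lam eta l0 xi"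
  shows "insert None \<sigma> \<in> K_plus m lam eta l0 xi"
proof -
  let ?F = "ext_facet m lam eta l0 xi"
  define S where "S = (\<Inter>j\<in>\<sigma>. ?F j)"
  have "\<exists>z \<in> polytope_of m lam eta \<inter> S. l0 \<bullet> z = - xi"
  proof (cases "\<sigma> = {}")
    case True
    then show ?thesis
      using cut by (auto simp: S_def eq_neg_iff_add_eq_0)
  next
    case False
    then obtain j0 where j0: "j0 \<in> \<sigma>"
      by blast
    then have "S \<subseteq> ?F j0"
      unfolding S_def by (rule INT_lower)
    also have "\<dots> \<subseteq> polytope_of m lam eta"
      by (rule ext_facet_subset_polytope_of)
    finally have "S \<subseteq> polytope_of m lam eta" .
    moreover
    from plus j0 obtain x where "x \<in> S" "x \<in> half_plus l0 xi"
      unfolding mem_K_plus_iff S_def by blast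
    moreover
    from minus j0 obtain y where "y \<in> S" "y \<in> half_minus l0 xi"
      unfolding mem_K_minus_iff S_def by blast
    moreover have "connected S"
      by (simp add: S_def convex_connected convex_INT convex_ext_facet)
    ultimately show ?thesis
      using connected_ivt_hyperplane[of S y x l0 "- xi"]
      by (fastforce simp: half_plus_def half_minus_def)
  qed
  then obtain z where "z \<in> polytope_of m lam eta" "z \<in> S" "l0 \<bullet> z + xi = 0"
    by (auto simp: eq_neg_iff_add_eq_0)
  then have "z \<in> (\<Inter>j\<in>insert None \<sigma>. ?F j \<inter> half_plus l0 xi)"
    by (auto simp: S_def ext_facet_def half_plus_def)
  moreover have "insert None \<sigma> \<subseteq> ext_index m"
    using plus unfolding mem_K_plus_iff ext_index_def by blast
  ultimately show ?thesis
    unfolding mem_K_plus_iff by blast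
qed

lemma K_Delta_iff_None_notin_if_common_point:
  assumes "\<sigma> \<subseteq> ext_index m" "\<forall>j\<in>\<sigma>. x \<in> ext_facet m lam eta l0 xi j"
  shows "\<sigma> \<in> K_Delta m lam eta \<longleftrightarrow> None \<notin> \<sigma>"
proof
  show "\<sigma> \<in> K_Delta m lam eta \<Longrightarrow> None \<notin> \<sigma>"
    unfolding K_Delta_def by auto
next
  assume "None \<notin> \<sigma>"
  then have \<sigma>: "\<sigma> = Some ` Option.these \<sigma>"
    using Some_image_these_eq[of \<sigma>] by auto
  have "Option.these \<sigma> \<subseteq> {1..m}"
    using assms(1) by (auto simp: ext_index_def in_these_eq)
  moreover have "x \<in> (\<Inter>i\<in>Option.these \<sigma>. poly_facet m lam eta i)"
    using assms(2) by (auto simp: in_these_eq ext_facet_def split: option.splits)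
  ultimately have "Some ` Option.these \<sigma> \<in> K_Delta m lam eta"
    unfolding K_Delta_def by blast
  with \<sigma> show "\<sigma> \<in> K_Delta m lam eta"
    by simp
qed

lemma K_Delta_iff_None_notin:
  assumes "\<sigma> \<in> K_plus m lam eta l0 xi \<union> K_minus m lam eta l0 xi"
  shows "\<sigma> \<in> K_Delta m lam eta \<longleftrightarrow> None \<notin> \<sigma>"
proof -
  obtain x where "\<sigma> \<subseteq> ext_index m" "\<forall>j\<in>\<sigma>. x \<in> ext_facet m lam eta l0 xi j"
    using assms unfolding Un_iff mem_K_plus_iff mem_K_minus_iff by blast
  then show ?thesis
    by (rule K_Delta_iff_None_notin_if_common_point)
qed

theorem lemma3p8:
  fixes m :: nat and lam :: "nat \<Rightarrow> 'a::euclidean_space" and eta :: "nat \<Rightarrow> real"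
    and l0 :: 'a and xi :: real
  assumes "bounded (polytope_of m lam eta)"
    and "aff_dim (polytope_of m lam eta) = int DIM('a)"
    and "simple_polytope m lam eta"
    and "general_position lam eta {1..m}"
    and "\<forall>i\<in>{1..m}. poly_facet m lam eta i \<noteq> {}"
    and "generic_cut m lam eta l0 xi"
  defines "KD \<equiv> K_Delta m lam eta"
    and "Kp \<equiv> K_plus m lam eta l0 xi"
    and "Km \<equiv> K_minus m lam eta l0 xi"
  shows "Kp \<inter> Km = star_at (Kp \<union> Km) None \<and>
         star_at (Kp \<union> Km) None = star_at Kp None \<and>
         star_at Kp None = star_at Km None \<and>
         (Kp \<union> Km) - KD = open_star_at (Kp \<union> Km) None \<and>
         open_star_at (Kp \<union> Km) None = open_star_at Kp None \<and>
         open_star_at Kp None = open_star_at Km None"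
proof -
  have agree: "\<And>\<sigma>. None \<in> \<sigma> \<Longrightarrow> \<sigma> \<in> Kp \<longleftrightarrow> \<sigma> \<in> Km"
    unfolding Kp_def Km_def by (rule K_plus_iff_K_minus_if_None)
  then have agree_Un: "\<And>\<sigma>. None \<in> \<sigma> \<Longrightarrow> \<sigma> \<in> Kp \<union> Km \<longleftrightarrow> \<sigma> \<in> Kp"
    by blast
  have cut: "polytope_of m lam eta \<inter> {x. l0 \<bullet> x + xi = 0} \<noteq> {}"
    using assms(6) unfolding generic_cut_def by blast
  have "Kp \<inter> Km = star_at (Kp \<union> Km) None"
    unfolding Kp_def Km_def
    by (rule Int_eq_star_at_Un[OF K_plus_subset_closed K_minus_subset_closed
          K_plus_iff_K_minus_if_None insert_None_K_plus[OF cut]])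
  moreover have "(Kp \<union> Km) - KD = open_star_at (Kp \<union> Km) None"
    unfolding KD_def Kp_def Km_def by (rule Diff_eq_open_star_at[OF K_Delta_iff_None_notin])
  ultimately show ?thesis
    using star_at_cong[OF agree_Un] star_at_cong[OF agree]
      open_star_at_cong[OF agree_Un] open_star_at_cong[OF agree] by blast
qed

end
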